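(* Let $0<q<\tfrac13$, $\lambda>1$, $\Theta=(1/q)^{1/\lambda}$, and let $(\mathcal{Q}_n)_{n\in\mathbb{N}^+}$ be a sequence with $\mathcal{Q}_n\in10\mathbb{N}^+$, $\mathcal{Q}_{n+1}/\mathcal{Q}_n\in10\mathbb{N}^+$ for all $n$, and $\ell_1\exp(\Theta^n)\le\mathcal{Q}_n\le\ell_2\exp(\Theta^n)$ for some constants $0<\ell_1\le\ell_2$. Define \[ \mathscr{P}_{\mathscr{H}}(x_1,x_2,y_1,y_2)=\sum_{n=1}^\infty\frac{q^n}{\mathcal{Q}_n^6}\sin(\pi\mathcal{Q}_nx_1)+\sum_{n=1}^\infty\frac{q^n}{\mathcal{Q}_n^6}\sin(\pi\mathcal{Q}_ny_2). \] Then $\mathscr{P}_{\mathscr{H}}\in C^6(\mathbb{R}^4)$, and all its partial derivatives of order $6$ are $\lambda$-Logarithmic Hölder continuous: there are $C>0$ and $h_0\in(0,1)$ such that $|\partial^\alpha\mathscr{P}_{\mathscr{H}}(z+h)-\partial^\alpha\mathscr{P}_{\mathscr{H}}(z)|\le C(-\ln|h|)^{-\lambda}$ for all $|\alpha|=6$, $z\in\mathbb{R}^4$ and $0<|h|\le h_0$. However, the $6$-th order derivatives are nowhere Hölder continuous; more precisely, for $\mathscr{P}(x):=\sum_{n=1}^\infty q^n\sin(\pi\mathcal{Q}_nx)$ (so that $\partial_{x_1}^6\mathscr{P}_{\mathscr{H}}=-\pi^6\mathscr{P}(x_1)$), for every $x\in\mathbb{R}$ and every $\alpha\in(0,1)$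 there is a sequence $\upsilon_m\to0$, $\upsilon_m\ne0$, with \[ \lim_{m\to\infty}\frac{|\mathscr{P}(x+\upsilon_m)-\mathscr{P}(x)|}{|\upsilon_m|^\alpha}=+\infty. \]
   Context: $|\cdot|$ is the sup-norm on $\mathbb{R}^4$. *)

theory Defs
  imports "HOL-Analysis.Analysis"
begin

definition partial :: "'n::finite \<Rightarrow> (real^'n \<Rightarrow> real) \<Rightarrow> real^'n \<Rightarrow> real" where
  "partial i f z = deriv (\<lambda>t. f (z + t *\<^sub>R axis i 1)) 0"

text \<open>Iterated partial derivative along a list of coordinate indices (a multi-index of order length).\<close>
definition iter_partial :: "'n::finite list \<Rightarrow> (real^'n \<Rightarrow> real) \<Rightarrow> real^'n \<Rightarrow> real" where
  "iter_partial is f = foldr partial is f"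

fun Ck :: "nat \<Rightarrow> (real^'n::finite \<Rightarrow> real) \<Rightarrow> bool" where
  "Ck 0 f = continuous_on UNIV f"
| "Ck (Suc k) f = (continuous_on UNIV f \<and>
      (\<forall>i z. (\<lambda>t. f (z + t *\<^sub>R axis i 1)) differentiable (at 0)) \<and>
      (\<forall>i. Ck k (partial i f)))"

end

theory Submission
  imports Defs "HOL-Real_Asymp.Real_Asymp"
begin

text \<open>Differentiating termwise, every sixth-order partial derivative of PH is the sum of two
  functions of a single coordinate, each of them 0 or \<open>-pi^6 P\<close>, so everything reduces to the
  lacunary series \<open>P x = (\<Sum>n. q^n sin (pi Q_n x))\<close>.

  If \<open>|t| \<le> exp (-L)\<close>, split \<open>P (x + t) - P x\<close> at the first n with \<open>\<Theta>^n > L/2\<close>. The earlier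
  terms are Lipschitz with constant at most \<open>pi Q_n \<le> pi l2 exp (L/2)\<close> and contribute
  \<open>O(exp (-L/2))\<close>, while the tail is \<open>O(q^n) = O(\<Theta>^(-lam n)) = O(L^(-lam))\<close>.

  Hoelder continuity fails: take \<open>\<upsilon> = e / (5 Q_n)\<close> with \<open>e \<in> {5, 1, -1}\<close>. As \<open>Q_k / Q_n\<close> is
  a multiple of 10 for \<open>k > n\<close>, all later terms vanish; a suitable e makes the n-th term at least
  \<open>c q^n\<close>; and the earlier terms are \<open>O(Q_(n-1) / Q_n)\<close>, which is doubly exponentially small.
  Since \<open>|\<upsilon>|^\<alpha> \<le> Q_n^(-\<alpha>)\<close> is doubly exponentially small as well, the difference quotients
  blow up.\<close>

section \<open>Partial derivatives of sums of one-variable functions of two coordinates\<close>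

lemma has_real_derivative_separable_line:
  fixes A B A' B' :: "real \<Rightarrow> real" and z :: "real^'n"
  assumes "\<And>x. (A has_real_derivative A' x) (at x)"
    and "\<And>x. (B has_real_derivative B' x) (at x)"
  shows "((\<lambda>t. A ((z + t *\<^sub>R axis l 1) $ i) + B ((z + t *\<^sub>R axis l 1) $ j)) has_real_derivative
      (if l = i then A' else (\<lambda>_. 0)) (z $ i) + (if l = j then B' else (\<lambda>_. 0)) (z $ j)) (at 0)"
proof -
  have line: "((\<lambda>t. C ((z + t *\<^sub>R axis l 1) $ m)) has_real_derivative
      (if l = m then C' else (\<lambda>_. 0)) (z $ m)) (at 0)"
    if dC: "\<And>x. (C has_real_derivative C' x) (at x)" for C C' :: "real \<Rightarrow> real" and m
  proof (cases "l = m")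
    case True
    have "((\<lambda>t. z $ m + t) has_real_derivative 1) (at 0)"
      by (auto intro!: derivative_eq_intros)
    from DERIV_chain2[OF _ this, of C "C' (z $ m)"] dC
    have "((\<lambda>t. C (z $ m + t)) has_real_derivative C' (z $ m)) (at 0)" by simp
    then show ?thesis using True by (simp add: axis_def)
  qed (simp add: axis_def)
  show ?thesis using line[OF assms(1), of i] line[OF assms(2), of j] by (rule DERIV_add)
qed

lemma partial_separable:
  fixes A B A' B' :: "real \<Rightarrow> real"
  assumes "\<And>x. (A has_real_derivative A' x) (at x)"
    and "\<And>x. (B has_real_derivative B' x) (at x)"
  shows "partial l (\<lambda>z::real^'n. A (z $ i) + B (z $ j))
      = (\<lambda>z. (if l = i then A' else (\<lambda>_. 0)) (z $ i) + (if l = j then B' else (\<lambda>_. 0)) (z $ j))"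
  unfolding partial_def by (intro ext DERIV_imp_deriv has_real_derivative_separable_line[OF assms])

lemma differentiable_separable_line:
  fixes A B A' B' :: "real \<Rightarrow> real"
  assumes "\<And>x. (A has_real_derivative A' x) (at x)"
    and "\<And>x. (B has_real_derivative B' x) (at x)"
  shows "(\<lambda>t. (\<lambda>z::real^'n. A (z $ i) + B (z $ j)) (z + t *\<^sub>R axis l 1)) differentiable (at 0)"
  using has_real_derivative_separable_line[OF assms] unfolding real_differentiable_def by blast

lemma iter_partial_Cons: "iter_partial (l # \<alpha>) f = partial l (iter_partial \<alpha> f)"
  by (simp add: iter_partial_def)

locale real_derivative_chain =
  fixes F :: "nat \<Rightarrow> real \<Rightarrow> real" and k :: nat
  assumes has_real_derivative_chain: "j < k \<Longrightarrow> (F j has_real_derivative F (Suc j) x) (at x)"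
    and continuous_on_last: "continuous_on UNIV (F k)"
begin

lemma continuous_on_chain: "j \<le> k \<Longrightarrow> continuous_on UNIV (F j)"
proof (cases "j = k")
  case False
  moreover assume "j \<le> k"
  ultimately have "j < k" by simp
  then show ?thesis
    using DERIV_isCont[OF has_real_derivative_chain[OF \<open>j < k\<close>]]
    by (simp add: continuous_at_imp_continuous_on)
qed (use continuous_on_last in simp)

text \<open>Every partial derivative of order j of \<open>\<lambda>z. F 0 (z $ i) + F 0 (z $ i')\<close> has the form
  \<open>\<lambda>z. F_or_zero j a (z $ i) + F_or_zero j b (z $ i')\<close>.\<close>
definition F_or_zero :: "nat \<Rightarrow> bool \<Rightarrow> real \<Rightarrow> real" where
  "F_or_zero j b = (if b then F j else (\<lambda>_. 0))"

lemma if_F_or_zero: "(if c then F_or_zero j b else (\<lambda>_. 0)) = F_or_zero j (c \<and> b)"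
  by (simp add: F_or_zero_def)

lemma has_real_derivative_F_or_zero:
  "j < k \<Longrightarrow> (F_or_zero j b has_real_derivative F_or_zero (Suc j) b x) (at x)"
  using has_real_derivative_chain by (simp add: F_or_zero_def)

lemma continuous_on_separable:
  assumes "j \<le> k"
  shows "continuous_on UNIV (\<lambda>z::real^'n. F_or_zero j a (z $ i) + F_or_zero j b (z $ i'))"
proof -
  have "continuous_on UNIV (F_or_zero j c)" for c
    using assms continuous_on_chain by (simp add: F_or_zero_def)
  then have "continuous_on UNIV (\<lambda>z::real^'n. F_or_zero j c (z $ m))" for c m
    by (rule continuous_on_compose2) (auto intro: continuous_intros)
  then show ?thesis by (intro continuous_on_add)
qed

lemma partial_separable_F_or_zero:
  "j < k \<Longrightarrow> partial l (\<lambda>z::real^'n. F_or_zero j a (z $ i) + F_or_zero j b (z $ i'))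
     = (\<lambda>z. F_or_zero (Suc j) (l = i \<and> a) (z $ i) + F_or_zero (Suc j) (l = i' \<and> b) (z $ i'))"
  by (simp add: partial_separable[OF has_real_derivative_F_or_zero has_real_derivative_F_or_zero]
      if_F_or_zero)

lemma Ck_separable:
  "j + m \<le> k \<Longrightarrow> Ck m (\<lambda>z::real^'n. F_or_zero j a (z $ i) + F_or_zero j b (z $ i'))"
proof (induction m arbitrary: j a b)
  case 0
  then show ?case using continuous_on_separable by simp
next
  case (Suc m)
  then have "j < k" by simp
  have derivatives: "Ck m (partial l (\<lambda>z::real^'n. F_or_zero j a (z $ i) + F_or_zero j b (z $ i')))"
    for l
    unfolding partial_separable_F_or_zero[OF \<open>j < k\<close>] by (rule Suc.IH) (use Suc.prems in simp)
  have continuous: "continuous_on UNIV (\<lambda>z::real^'n. F_or_zero j a (z $ i) + F_or_zero j b (z $ i'))"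
    by (rule continuous_on_separable) (use Suc.prems in simp)
  have differentiable:
    "(\<lambda>t. (\<lambda>z::real^'n. F_or_zero j a (z $ i) + F_or_zero j b (z $ i')) (z + t *\<^sub>R axis l 1))
       differentiable (at 0)" for l z
    using has_real_derivative_F_or_zero[OF \<open>j < k\<close>]
    by (rule differentiable_separable_line) (rule has_real_derivative_F_or_zero[OF \<open>j < k\<close>])
  show ?case
    unfolding Ck.simps by (intro conjI allI continuous differentiable derivatives)
qed

lemma iter_partial_separable:
  "length \<alpha> \<le> k \<Longrightarrow> \<exists>a b. iter_partial \<alpha> (\<lambda>z::real^'n. F 0 (z $ i) + F 0 (z $ i'))
     = (\<lambda>z. F_or_zero (length \<alpha>) a (z $ i) + F_or_zero (length \<alpha>) b (z $ i'))"
proof (induction \<alpha>)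
  case Nil
  show ?case by (rule exI[of _ True], rule exI[of _ True]) (simp add: iter_partial_def F_or_zero_def)
next
  case (Cons l \<alpha>)
  then have "length \<alpha> < k" by simp
  with Cons.IH obtain a b where eq: "iter_partial \<alpha> (\<lambda>z::real^'n. F 0 (z $ i) + F 0 (z $ i'))
     = (\<lambda>z. F_or_zero (length \<alpha>) a (z $ i) + F_or_zero (length \<alpha>) b (z $ i'))"
    by fastforce
  show ?case
    by (rule exI[of _ "l = i \<and> a"], rule exI[of _ "l = i' \<and> b"])
      (simp add: iter_partial_Cons eq partial_separable_F_or_zero[OF \<open>length \<alpha> < k\<close>])
qed

lemma iter_partial_replicate:
  assumes "0 < m" "m \<le> k" "i \<noteq> i'"
  shows "iter_partial (replicate m i) (\<lambda>z::real^'n. F 0 (z $ i) + F 0 (z $ i')) = (\<lambda>z. F m (z $ i))"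
proof -
  have "iter_partial (replicate m i) (\<lambda>z::real^'n. F 0 (z $ i) + F 0 (z $ i'))
      = (\<lambda>z. F_or_zero m True (z $ i) + F_or_zero m (m = 0) (z $ i'))" if "m \<le> k" for m
    using that
  proof (induction m)
    case 0
    then show ?case by (simp add: iter_partial_def F_or_zero_def)
  next
    case (Suc m)
    then show ?case
      using assms(3) by (simp add: iter_partial_Cons partial_separable_F_or_zero)
  qed
  then show ?thesis using assms by (simp add: F_or_zero_def)
qed

lemma Ck_coordinate_sum: "Ck k (\<lambda>z::real^'n. F 0 (z $ i) + F 0 (z $ i'))"
  using Ck_separable[of 0 k True i True i'] by (simp add: F_or_zero_def)

lemma iter_partial_separable_increment_le:
  assumes "length \<alpha> = k" "infnorm h \<le> r"
    and modulus: "\<And>y s. \<bar>s\<bar> \<le> r \<Longrightarrow> \<bar>F k (y + s) - F k y\<bar> \<le> c"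
  shows "\<bar>iter_partial \<alpha> (\<lambda>z::real^'n. F 0 (z $ i) + F 0 (z $ i')) (z + h)
          - iter_partial \<alpha> (\<lambda>z. F 0 (z $ i) + F 0 (z $ i')) z\<bar> \<le> 2 * c"
proof -
  obtain a b where eq: "iter_partial \<alpha> (\<lambda>z::real^'n. F 0 (z $ i) + F 0 (z $ i'))
     = (\<lambda>z. F_or_zero k a (z $ i) + F_or_zero k b (z $ i'))"
    using iter_partial_separable[of \<alpha> i i'] assms(1) by auto
  have "0 \<le> r" using assms(2) infnorm_pos_le[of h] by linarith
  then have inc: "\<bar>F_or_zero k a' (y + s) - F_or_zero k a' y\<bar> \<le> c" if "\<bar>s\<bar> \<le> r" for a' y s
    using that modulus[of 0 y] modulus[of s y] by (auto simp: F_or_zero_def)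
  have "\<bar>h $ i\<bar> \<le> r" "\<bar>h $ i'\<bar> \<le> r"
    using component_le_infnorm_cart[of h] assms(2) by (meson order.trans)+
  then have "\<bar>F_or_zero k a (z $ i + h $ i) - F_or_zero k a (z $ i)\<bar> \<le> c"
      "\<bar>F_or_zero k b (z $ i' + h $ i') - F_or_zero k b (z $ i')\<bar> \<le> c"
    by (simp_all add: inc)
  then show ?thesis unfolding eq by simp
qed

end

section \<open>The lacunary sine series and its termwise derivatives\<close>

definition lacunary_sine :: "real \<Rightarrow> (nat \<Rightarrow> real) \<Rightarrow> real \<Rightarrow> real" where
  "lacunary_sine q \<omega> x = (\<Sum>n. q ^ Suc n * sin (pi * \<omega> n * x))"

lemma sums_mult_power_Suc: "\<bar>q\<bar> < 1 \<Longrightarrow> (\<lambda>n. c * q ^ Suc n) sums (c * q / (1 - q))"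
  for q c :: real
  using sums_mult[OF geometric_sums, of q "c * q"] by (simp add: mult.assoc)

lemma summable_lacunary_sine_terms:
  fixes q x :: real and \<omega> :: "nat \<Rightarrow> real"
  assumes "\<bar>q\<bar> < 1"
  shows "summable (\<lambda>n. q ^ Suc n * sin (pi * \<omega> n * x))"
proof (rule summable_comparison_test'[OF sums_summable[OF sums_mult_power_Suc[OF _, of _ 1]]])
  show "\<bar>\<bar>q\<bar>\<bar> < 1" using assms by simp
  show "norm (q ^ Suc n * sin (pi * \<omega> n * x)) \<le> 1 * \<bar>q\<bar> ^ Suc n" for n
    by (simp add: abs_mult power_abs mult_left_le del: power_Suc)
qed

text \<open>The k-th derivative of the n-th term of \<open>\<Sum>n. q^(n+1) / \<omega>_n^s * sin (pi \<omega>_n x)\<close>; the phase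
  \<open>k pi / 2\<close> comes from \<open>sin' \<theta> = sin (\<theta> + pi / 2)\<close>.\<close>
definition lacunary_deriv_term :: "real \<Rightarrow> (nat \<Rightarrow> real) \<Rightarrow> nat \<Rightarrow> nat \<Rightarrow> nat \<Rightarrow> real \<Rightarrow> real" where
  "lacunary_deriv_term q \<omega> s k n x
     = q ^ Suc n / \<omega> n ^ s * (pi * \<omega> n) ^ k * sin (pi * \<omega> n * x + real k * pi / 2)"

definition lacunary_deriv :: "real \<Rightarrow> (nat \<Rightarrow> real) \<Rightarrow> nat \<Rightarrow> nat \<Rightarrow> real \<Rightarrow> real" where
  "lacunary_deriv q \<omega> s k x = (\<Sum>n. lacunary_deriv_term q \<omega> s k n x)"

lemma has_real_derivative_lacunary_deriv_term:
  "(lacunary_deriv_term q \<omega> s k n has_real_derivative lacunary_deriv_term q \<omega> s (Suc k) n x) (at x)"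
proof -
  define \<theta> where "\<theta> = pi * \<omega> n * x + real k * pi / 2"
  have "sin (pi * \<omega> n * x + real (Suc k) * pi / 2) = cos \<theta>"
  proof -
    have "pi * \<omega> n * x + real (Suc k) * pi / 2 = \<theta> + pi / 2"
      by (simp add: \<theta>_def field_simps)
    then show ?thesis by (simp add: sin_add)
  qed
  moreover have "((\<lambda>x. sin (pi * \<omega> n * x + real k * pi / 2)) has_real_derivative cos \<theta> * (pi * \<omega> n))
      (at x)"
    unfolding \<theta>_def by (auto intro!: derivative_eq_intros)
  from DERIV_cmult[OF this, of "q ^ Suc n / \<omega> n ^ s * (pi * \<omega> n) ^ k"]
  have "(lacunary_deriv_term q \<omega> s k n has_real_derivative
      q ^ Suc n / \<omega> n ^ s * (pi * \<omega> n) ^ Suc k * cos \<theta>) (at x)"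
    unfolding lacunary_deriv_term_def[abs_def] by (simp add: mult_ac)
  ultimately show ?thesis by (simp add: lacunary_deriv_term_def)
qed

context
  fixes q :: real and \<omega> :: "nat \<Rightarrow> real"
  assumes q_pos: "0 < q" and q_less_1: "q < 1" and one_le_\<omega>: "\<And>n. 1 \<le> \<omega> n"
begin

lemma \<omega>_nonzero: "\<omega> n \<noteq> 0"
  using one_le_\<omega>[of n] by simp

lemma abs_lacunary_deriv_term_le:
  assumes "k \<le> s"
  shows "\<bar>lacunary_deriv_term q \<omega> s k n x\<bar> \<le> pi ^ s * q ^ Suc n"
proof -
  have \<omega>: "1 \<le> \<omega> n" by (rule one_le_\<omega>)
  have "\<bar>lacunary_deriv_term q \<omega> s k n x\<bar>
      = q ^ Suc n * pi ^ k * (\<omega> n ^ k / \<omega> n ^ s) * \<bar>sin (pi * \<omega> n * x + real k * pi / 2)\<bar>"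
    using q_pos \<omega> by (simp add: lacunary_deriv_term_def abs_mult power_mult_distrib)
  also have "\<dots> \<le> q ^ Suc n * pi ^ s * 1 * 1"
  proof (intro mult_mono)
    show "pi ^ k \<le> pi ^ s"
      using assms by (intro power_increasing) (auto intro: order.trans[OF _ pi_ge_two])
    show "\<omega> n ^ k / \<omega> n ^ s \<le> 1"
      using assms \<omega> by (simp add: power_increasing)
  qed (use q_pos \<omega> in auto)
  finally show ?thesis by (simp add: mult.commute)
qed

lemma uniform_limit_lacunary_deriv:
  "k \<le> s \<Longrightarrow> uniform_limit UNIV (\<lambda>m x. \<Sum>n<m. lacunary_deriv_term q \<omega> s k n x)
     (lacunary_deriv q \<omega> s k) sequentially"
  unfolding lacunary_deriv_def[abs_def]
  by (rule Weierstrass_m_test[OF _ sums_summable[OF sums_mult_power_Suc[of q "pi ^ s"]]])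
    (use abs_lacunary_deriv_term_le q_pos q_less_1 in auto)

lemma continuous_on_lacunary_deriv: "k \<le> s \<Longrightarrow> continuous_on UNIV (lacunary_deriv q \<omega> s k)"
  by (rule uniform_limit_theorem[OF _ uniform_limit_lacunary_deriv])
    (auto intro!: always_eventually continuous_intros simp: lacunary_deriv_term_def \<omega>_nonzero)

lemma has_real_derivative_lacunary_deriv:
  assumes "k < s"
  shows "(lacunary_deriv q \<omega> s k has_real_derivative lacunary_deriv q \<omega> s (Suc k) x) (at x)"
  unfolding lacunary_deriv_def[abs_def]
proof (rule has_field_derivative_series'(2)[of UNIV])
  show "uniformly_convergent_on UNIV (\<lambda>m x. \<Sum>n<m. lacunary_deriv_term q \<omega> s (Suc k) n x)"
    using uniform_limit_lacunary_deriv[of "Suc k" s] assms unfolding uniformly_convergent_on_def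
    by (auto simp: Suc_le_eq)
  show "summable (\<lambda>n. lacunary_deriv_term q \<omega> s k n 0)"
    by (rule summable_comparison_test'[OF sums_summable[OF sums_mult_power_Suc[of q "pi ^ s"]]])
      (use abs_lacunary_deriv_term_le assms q_pos q_less_1 in auto)
qed (auto intro: has_real_derivative_lacunary_deriv_term)

lemma real_derivative_chain_lacunary_deriv: "real_derivative_chain (lacunary_deriv q \<omega> s) s"
  by unfold_locales (auto intro: has_real_derivative_lacunary_deriv continuous_on_lacunary_deriv)

lemma lacunary_deriv_six: "lacunary_deriv q \<omega> 6 6 x = - (pi ^ 6) * lacunary_sine q \<omega> x"
proof -
  have "lacunary_deriv_term q \<omega> 6 6 n x = - (pi ^ 6) * (q ^ Suc n * sin (pi * \<omega> n * x))" for n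
  proof -
    have "pi * \<omega> n * x + real 6 * pi / 2 = (pi * \<omega> n * x + pi) + 2 * pi" by simp
    then have "sin (pi * \<omega> n * x + real 6 * pi / 2) = - sin (pi * \<omega> n * x)"
      by (simp only: sin_periodic sin_periodic_pi)
    then show ?thesis
      using one_le_\<omega>[of n] by (simp add: lacunary_deriv_term_def power_mult_distrib del: of_nat_numeral)
  qed
  then show ?thesis
    using summable_lacunary_sine_terms[of q \<omega> x] q_pos q_less_1
    by (simp add: lacunary_deriv_def lacunary_sine_def suminf_minus summable_mult suminf_mult)
qed

lemma abs_lacunary_deriv_six_diff:
  "\<bar>lacunary_deriv q \<omega> 6 6 (y + s) - lacunary_deriv q \<omega> 6 6 y\<bar>
    = pi ^ 6 * \<bar>lacunary_sine q \<omega> (y + s) - lacunary_sine q \<omega> y\<bar>"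
proof -
  have "lacunary_deriv q \<omega> 6 6 (y + s) - lacunary_deriv q \<omega> 6 6 y
      = - (pi ^ 6) * (lacunary_sine q \<omega> (y + s) - lacunary_sine q \<omega> y)"
    by (simp add: lacunary_deriv_six algebra_simps)
  then show ?thesis by (simp add: abs_mult)
qed

end

lemma lacunary_deriv_0:
  "lacunary_deriv q \<omega> s 0 x = (\<Sum>n. q ^ Suc n / \<omega> n ^ s * sin (pi * \<omega> n * x))"
  by (simp add: lacunary_deriv_def lacunary_deriv_term_def)

section \<open>Logarithmic Hoelder continuity of the lacunary sine series\<close>

lemma abs_sin_diff_le: "\<bar>sin a - sin b\<bar> \<le> \<bar>a - b\<bar>" for a b :: real
proof -
  have "\<bar>sin a - sin b\<bar> = 2 * \<bar>sin ((a - b) / 2)\<bar> * \<bar>cos ((a + b) / 2)\<bar>"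
    by (simp add: sin_diff_sin abs_mult)
  also have "\<dots> \<le> 2 * \<bar>sin ((a - b) / 2)\<bar>"
    by (intro mult_left_le) (auto simp: abs_cos_le_one)
  also have "\<dots> \<le> 2 * \<bar>(a - b) / 2\<bar>"
    using abs_sin_x_le_abs_x[of "(a - b) / 2"] by simp
  finally show ?thesis by simp
qed

lemma abs_sine_sum_increment_le:
  fixes q B x \<upsilon> :: real and \<omega> :: "nat \<Rightarrow> real" and K :: "nat set"
  assumes q: "0 < q" "q < 1" and "finite K" "0 \<le> B" and "\<And>k. k \<in> K \<Longrightarrow> \<bar>\<omega> k * \<upsilon>\<bar> \<le> B"
  shows "\<bar>\<Sum>k\<in>K. q ^ Suc k * (sin (\<omega> k * (x + \<upsilon>)) - sin (\<omega> k * x))\<bar> \<le> q / (1 - q) * B"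
proof -
  have "\<bar>\<Sum>k\<in>K. q ^ Suc k * (sin (\<omega> k * (x + \<upsilon>)) - sin (\<omega> k * x))\<bar> \<le> (\<Sum>k\<in>K. q ^ Suc k * B)"
  proof (rule order_trans[OF sum_abs sum_mono])
    fix k assume "k \<in> K"
    have "\<bar>sin (\<omega> k * (x + \<upsilon>)) - sin (\<omega> k * x)\<bar> \<le> B"
      using abs_sin_diff_le[of "\<omega> k * (x + \<upsilon>)" "\<omega> k * x"] assms(5)[OF \<open>k \<in> K\<close>]
      by (simp add: algebra_simps)
    then show "\<bar>q ^ Suc k * (sin (\<omega> k * (x + \<upsilon>)) - sin (\<omega> k * x))\<bar> \<le> q ^ Suc k * B"
      using q by (simp add: abs_mult mult_left_mono del: power_Suc)
  qed
  also have "\<dots> = (\<Sum>k\<in>K. q ^ Suc k) * B" by (simp add: sum_distrib_right)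
  also have "\<dots> \<le> q / (1 - q) * B"
  proof (rule mult_right_mono[OF _ \<open>0 \<le> B\<close>])
    have "(\<Sum>k\<in>K. 1 * q ^ Suc k) \<le> (\<Sum>k. 1 * q ^ Suc k)"
      using q \<open>finite K\<close> sums_mult_power_Suc[of q 1]
      by (intro sum_le_suminf) (auto simp: sums_iff)
    then show "(\<Sum>k\<in>K. q ^ Suc k) \<le> q / (1 - q)"
      using q sums_mult_power_Suc[of q 1] by (simp add: sums_iff)
  qed
  finally show ?thesis .
qed

text \<open>Lipschitz bound for the first m terms, trivial bound for the tail.\<close>
lemma lacunary_sine_increment_le:
  fixes q B t x :: real and \<omega> :: "nat \<Rightarrow> real"
  assumes q: "0 < q" "q < 1" and "0 \<le> B" and head: "\<And>n. n < m \<Longrightarrow> \<bar>pi * \<omega> n * t\<bar> \<le> B"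
  shows "\<bar>lacunary_sine q \<omega> (x + t) - lacunary_sine q \<omega> x\<bar> \<le> (q * B + 2 * q ^ Suc m) / (1 - q)"
proof -
  define d where "d n = q ^ Suc n * (sin (pi * \<omega> n * (x + t)) - sin (pi * \<omega> n * x))" for n
  have "summable d"
    unfolding d_def right_diff_distrib using q
    by (intro summable_diff summable_lacunary_sine_terms) auto
  have "lacunary_sine q \<omega> (x + t) - lacunary_sine q \<omega> x = suminf d"
    unfolding lacunary_sine_def d_def right_diff_distrib using q
    by (intro suminf_diff summable_lacunary_sine_terms) auto
  also have "\<dots> = (\<Sum>n<m. d n) + (\<Sum>i. d (i + m))"
    using suminf_split_initial_segment[OF \<open>summable d\<close>, of m] by simp
  finally have split: "lacunary_sine q \<omega> (x + t) - lacunary_sine q \<omega> x = (\<Sum>n<m. d n) + (\<Sum>i. d (i + m))" .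
  have head_bound: "\<bar>\<Sum>n<m. d n\<bar> \<le> q / (1 - q) * B"
    unfolding d_def using q \<open>0 \<le> B\<close> head by (intro abs_sine_sum_increment_le) auto
  have "norm (\<Sum>i. d (i + m)) \<le> (\<Sum>i. 2 * q ^ m * q ^ Suc i)"
  proof (rule norm_suminf_le)
    show "norm (d (i + m)) \<le> 2 * q ^ m * q ^ Suc i" for i
    proof -
      let ?a = "pi * \<omega> (i + m) * (x + t)" and ?b = "pi * \<omega> (i + m) * x"
      have "q ^ Suc (i + m) = q ^ m * q ^ Suc i" by (simp add: power_add mult_ac)
      then have "norm (d (i + m)) = q ^ m * q ^ Suc i * \<bar>sin ?a - sin ?b\<bar>"
        using q unfolding d_def by (simp add: abs_mult del: power_Suc)
      also have "\<dots> \<le> q ^ m * q ^ Suc i * 2"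
      proof (rule mult_left_mono)
        show "\<bar>sin ?a - sin ?b\<bar> \<le> 2"
          using abs_sin_le_one[of ?a] abs_sin_le_one[of ?b] by linarith
      qed (use q in simp)
      finally show ?thesis by (simp add: mult_ac)
    qed
    show "summable (\<lambda>i. 2 * q ^ m * q ^ Suc i)"
      using sums_mult_power_Suc[of q "2 * q ^ m"] q by (auto simp: sums_iff)
  qed
  also have "(\<Sum>i. 2 * q ^ m * q ^ Suc i) = 2 * q ^ Suc m / (1 - q)"
    using sums_mult_power_Suc[of q "2 * q ^ m"] q by (simp add: sums_iff mult_ac)
  finally have tail_bound: "\<bar>\<Sum>i. d (i + m)\<bar> \<le> 2 * q ^ Suc m / (1 - q)"
    by (simp only: real_norm_def)
  have "\<bar>lacunary_sine q \<omega> (x + t) - lacunary_sine q \<omega> x\<bar> \<le> \<bar>\<Sum>n<m. d n\<bar> + \<bar>\<Sum>i. d (i + m)\<bar>"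
    unfolding split by (rule abs_triangle_ineq)
  also have "\<dots> \<le> q / (1 - q) * B + 2 * q ^ Suc m / (1 - q)"
    by (rule add_mono[OF head_bound tail_bound])
  also have "\<dots> = (q * B + 2 * q ^ Suc m) / (1 - q)"
    by (simp only: add_divide_distrib times_divide_eq_left)
  finally show ?thesis .
qed

lemma ex_first_power_Suc_gt:
  fixes \<Theta> y :: real
  assumes "1 < \<Theta>"
  shows "\<exists>m. y < \<Theta> ^ Suc m \<and> (\<forall>n<m. \<Theta> ^ Suc n \<le> y)"
proof -
  obtain m0 where "y < \<Theta> ^ m0" using real_arch_pow[OF assms] by blast
  moreover have "\<Theta> ^ m0 \<le> \<Theta> ^ Suc m0" using assms by (intro power_increasing) auto
  ultimately have ex: "\<exists>m. y < \<Theta> ^ Suc m" by (meson order_less_le_trans)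
  have "\<Theta> ^ Suc n \<le> y" if "n < (LEAST m. y < \<Theta> ^ Suc m)" for n
    using not_less_Least[OF that] by linarith
  with LeastI_ex[OF ex] show ?thesis by blast
qed

lemma root_inverse_power_powr:
  fixes q lam :: real
  assumes "0 < q" "0 < lam"
  shows "(((1/q) powr (1/lam)) ^ n) powr (- lam) = q ^ n"
proof -
  have "((1/q) powr (1/lam)) ^ n = (1/q) powr (real n / lam)"
    using assms by (simp add: powr_realpow[symmetric] powr_powr)
  then have "(((1/q) powr (1/lam)) ^ n) powr (- lam) = (1/q) powr (- real n)"
    using assms by (simp add: powr_powr)
  also have "\<dots> = q ^ n" using assms by (simp add: powr_minus_divide powr_divide powr_realpow)
  finally show ?thesis .
qed

text \<open>The series is split at the first n with \<open>\<Theta>^(n+1) > L/2\<close>; the tail is then small because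
  \<open>q = \<Theta>^(-lam)\<close>.\<close>
lemma lacunary_sine_increment_le_log:
  fixes q lam l2 L t x :: real and \<omega> :: "nat \<Rightarrow> real"
  assumes q: "0 < q" "q < 1" and lam: "0 < lam" and "0 \<le> l2"
    and \<omega>: "\<And>n. 0 \<le> \<omega> n" "\<And>n. \<omega> n \<le> l2 * exp (((1/q) powr (1/lam)) ^ Suc n)"
    and L: "0 < L" "exp (- L / 2) \<le> L powr (- lam)" and t: "\<bar>t\<bar> \<le> exp (- L)"
  shows "\<bar>lacunary_sine q \<omega> (x + t) - lacunary_sine q \<omega> x\<bar>
    \<le> (q * pi * l2 + 2 * 2 powr lam) / (1 - q) * L powr (- lam)"
proof -
  define \<Theta> where "\<Theta> = (1/q) powr (1/lam)"
  have "1 < \<Theta>" unfolding \<Theta>_def using q lam by (intro gr_one_powr) auto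
  then obtain m where m: "L / 2 < \<Theta> ^ Suc m" "\<forall>n<m. \<Theta> ^ Suc n \<le> L / 2"
    using ex_first_power_Suc_gt by blast
  have head: "\<bar>pi * \<omega> n * t\<bar> \<le> pi * l2 * exp (- L / 2)" if "n < m" for n
  proof -
    have "\<omega> n \<le> l2 * exp (\<Theta> ^ Suc n)" using \<omega>(2)[of n] by (simp add: \<Theta>_def)
    also have "\<dots> \<le> l2 * exp (L / 2)"
      using m(2) that \<open>0 \<le> l2\<close> by (intro mult_left_mono) auto
    finally have "\<bar>pi * \<omega> n * t\<bar> \<le> pi * (l2 * exp (L / 2)) * exp (- L)"
      using \<omega>(1)[of n] t by (simp add: abs_mult mult_mono)
    also have "\<dots> = pi * l2 * exp (- L / 2)"
      by (simp add: mult.assoc flip: exp_add)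
    finally show ?thesis .
  qed
  have tail: "q ^ Suc m \<le> 2 powr lam * L powr (- lam)"
  proof -
    have "q ^ Suc m = (\<Theta> ^ Suc m) powr (- lam)"
      unfolding \<Theta>_def by (rule root_inverse_power_powr[symmetric, OF q(1) lam])
    also have "\<dots> \<le> (L / 2) powr (- lam)"
      using m(1) L lam by (intro powr_mono2') auto
    also have "\<dots> = 2 powr lam * L powr (- lam)"
      using L by (simp add: powr_divide powr_minus_divide)
    finally show ?thesis .
  qed
  have "\<bar>lacunary_sine q \<omega> (x + t) - lacunary_sine q \<omega> x\<bar>
      \<le> (q * (pi * l2 * exp (- L / 2)) + 2 * q ^ Suc m) / (1 - q)"
    using q \<open>0 \<le> l2\<close> head by (intro lacunary_sine_increment_le) auto
  also have "\<dots> \<le> (q * (pi * l2 * L powr (- lam)) + 2 * (2 powr lam * L powr (- lam))) / (1 - q)"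
    using q \<open>0 \<le> l2\<close> L tail by (intro divide_right_mono add_mono mult_left_mono) auto
  also have "\<dots> = (q * pi * l2 + 2 * 2 powr lam) / (1 - q) * L powr (- lam)"
    by (simp add: ring_distribs mult_ac)
  finally show ?thesis .
qed

lemma lacunary_sine_log_holder:
  fixes q lam l2 :: real and \<omega> :: "nat \<Rightarrow> real"
  assumes q: "0 < q" "q < 1" and lam: "0 < lam" and "0 \<le> l2"
    and \<omega>: "\<And>n. 0 \<le> \<omega> n" "\<And>n. \<omega> n \<le> l2 * exp (((1/q) powr (1/lam)) ^ Suc n)"
  shows "\<exists>C h0. 0 < C \<and> 0 < h0 \<and> h0 < 1 \<and> (\<forall>x t r. 0 < r \<and> r \<le> h0 \<and> \<bar>t\<bar> \<le> r \<longrightarrow>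
    \<bar>lacunary_sine q \<omega> (x + t) - lacunary_sine q \<omega> x\<bar> \<le> C * (- ln r) powr (- lam))"
proof -
  have "\<forall>\<^sub>F L in at_top. exp (- L / 2) \<le> (L::real) powr (- lam)"
    using lam by real_asymp
  then obtain L1 where L1: "\<And>L. L1 \<le> L \<Longrightarrow> exp (- L / 2) \<le> L powr (- lam)"
    by (auto simp: eventually_at_top_linorder)
  define h0 where "h0 = exp (- max L1 1)"
  define C where "C = (q * pi * l2 + 2 * 2 powr lam) / (1 - q)"
  have "\<bar>lacunary_sine q \<omega> (x + t) - lacunary_sine q \<omega> x\<bar> \<le> C * (- ln r) powr (- lam)"
    if "0 < r" "r \<le> h0" "\<bar>t\<bar> \<le> r" for x t r
  proof -
    have "ln r \<le> ln h0"
      using that by (subst ln_le_cancel_iff) (auto simp: h0_def)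
    then have "L1 \<le> - ln r" "0 < - ln r"
      using max.cobounded1[of L1 1] max.cobounded2[of 1 L1] by (simp_all add: h0_def)
    then show ?thesis
      unfolding C_def using that
      by (intro lacunary_sine_increment_le_log[OF q lam \<open>0 \<le> l2\<close> \<omega>] L1) auto
  qed
  moreover have "0 < C" using q \<open>0 \<le> l2\<close> by (simp add: C_def add_nonneg_pos)
  moreover have "0 < h0" "h0 < 1" by (auto simp: h0_def)
  ultimately show ?thesis by blast
qed

section \<open>Nowhere Hoelder continuity of the lacunary sine series\<close>

lemma sin_step_fifth_pi:
  fixes \<theta> :: real
  shows "\<exists>e \<in> {5, 1, -1 :: int}. sin (pi / 5) / 2 \<le> \<bar>sin (\<theta> + pi * of_int e / 5) - sin \<theta>\<bar>"
proof (cases "1 / 2 \<le> \<bar>sin \<theta>\<bar>")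
  case True
  have "\<bar>sin (\<theta> + pi * of_int 5 / 5) - sin \<theta>\<bar> = 2 * \<bar>sin \<theta>\<bar>" by (simp add: abs_mult)
  moreover have "sin (pi / 5) \<le> 1" by simp
  ultimately have "sin (pi / 5) / 2 \<le> \<bar>sin (\<theta> + pi * of_int 5 / 5) - sin \<theta>\<bar>"
    using True by linarith
  then show ?thesis by blast
next
  case False
  have sin_pos: "0 < sin (pi / 5)" by (rule sin_gt_zero) auto
  have "sin \<theta> ^ 2 < 1 / 4"
    using False abs_le_square_iff[of "1 / 2" "sin \<theta>"] by (simp add: power_divide)
  then have "1 / 4 < cos \<theta> ^ 2"
    using sin_cos_squared_add[of \<theta>] by linarith
  then have cos_gt: "1 / 2 < \<bar>cos \<theta>\<bar>"
    using abs_le_square_iff[of "cos \<theta>" "1 / 2"] by (simp add: power_divide)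
  define a where "a = sin (\<theta> + pi / 5) - sin \<theta>"
  define b where "b = sin (\<theta> - pi / 5) - sin \<theta>"
  have "a - b = 2 * cos \<theta> * sin (pi / 5)"
    by (simp add: a_def b_def sin_add sin_diff)
  then have "2 * \<bar>cos \<theta>\<bar> * sin (pi / 5) \<le> \<bar>a\<bar> + \<bar>b\<bar>"
    using sin_pos abs_triangle_ineq4[of a b] by (simp add: abs_mult)
  moreover have "sin (pi / 5) \<le> 2 * \<bar>cos \<theta>\<bar> * sin (pi / 5)"
    using cos_gt sin_pos by simp
  ultimately have "sin (pi / 5) / 2 \<le> \<bar>a\<bar> \<or> sin (pi / 5) / 2 \<le> \<bar>b\<bar>" by linarith
  moreover have "\<theta> + pi * of_int 1 / 5 = \<theta> + pi / 5" "\<theta> + pi * of_int (-1) / 5 = \<theta> - pi / 5"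
    by simp_all
  ultimately show ?thesis unfolding a_def b_def by (metis insertCI)
qed

lemma filterlim_exp_power_mult_power:
  fixes \<Theta> q b :: real
  assumes "1 < \<Theta>" "0 < q" "0 < b"
  shows "filterlim (\<lambda>n. exp (b * \<Theta> ^ n) * q ^ n) at_top sequentially"
proof -
  define s where "s = ln \<Theta>"
  have "0 < s" using assms by (simp add: s_def)
  then have "filterlim (\<lambda>y::real. exp (b * exp (s * y)) * exp (ln q * y)) at_top at_top"
    using assms by real_asymp
  from filterlim_compose[OF this filterlim_real_sequentially]
  have "filterlim (\<lambda>n. exp (b * exp (s * real n)) * exp (ln q * real n)) at_top sequentially"
    by (simp add: o_def)
  moreover have "exp (s * real n) = \<Theta> ^ n" "exp (ln q * real n) = q ^ n" for n
    using exp_of_nat_mult[of n s] exp_of_nat_mult[of n "ln q"] assms by (simp_all add: s_def mult.commute)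
  ultimately show ?thesis by simp
qed

locale lacunary_frequencies =
  fixes N :: "nat \<Rightarrow> nat" and \<Theta> l1 l2 :: real
  assumes N_pos: "0 < N n"
    and ten_N_dvd_Suc: "10 * N n dvd N (Suc n)"
    and N_lower: "l1 * exp (\<Theta> ^ Suc n) \<le> real (N n)"
    and N_upper: "real (N n) \<le> l2 * exp (\<Theta> ^ Suc n)"
    and \<Theta>_gt_1: "1 < \<Theta>"
    and l1_pos: "0 < l1"
begin

lemma strict_mono_N: "strict_mono N"
  unfolding strict_mono_Suc_iff
proof
  fix n
  have "10 * N n \<le> N (Suc n)" by (rule dvd_imp_le[OF ten_N_dvd_Suc N_pos])
  then show "N n < N (Suc n)" using N_pos[of n] by linarith
qed

lemma ten_N_dvd: "m < n \<Longrightarrow> 10 * N m dvd N n"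
proof (induction n)
  case (Suc n)
  show ?case
  proof (cases "m = n")
    case False
    with Suc have "10 * N m dvd N n" by simp
    also have "N n dvd N (Suc n)" using dvd_trans[OF dvd_triv_right ten_N_dvd_Suc] .
    finally show ?thesis .
  qed (simp add: ten_N_dvd_Suc)
qed simp

lemma filterlim_N_Suc: "filterlim (\<lambda>n. real (N (Suc n))) at_top sequentially"
  using filterlim_compose[OF filterlim_real_sequentially
      filterlim_compose[OF filterlim_subseq[OF strict_mono_N] filterlim_Suc]] .

lemma N_ratio_le: "real (N n) / real (N (Suc n)) \<le> l2 / l1 * exp (- ((1 - 1 / \<Theta>) * \<Theta> ^ Suc (Suc n)))"
proof -
  have "real (N n) / real (N (Suc n)) \<le> (l2 * exp (\<Theta> ^ Suc n)) / (l1 * exp (\<Theta> ^ Suc (Suc n)))"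
    using N_upper[of n] N_lower[of "Suc n"] l1_pos
    by (intro frac_le order_trans[OF _ N_upper[of n]]) auto
  also have "\<dots> = l2 / l1 * exp (\<Theta> ^ Suc n - \<Theta> ^ Suc (Suc n))"
    by (simp add: exp_diff)
  also have "\<Theta> ^ Suc n - \<Theta> ^ Suc (Suc n) = - ((1 - 1 / \<Theta>) * \<Theta> ^ Suc (Suc n))"
    using \<Theta>_gt_1 by (simp add: field_simps)
  finally show ?thesis .
qed

context
  fixes q :: real
  assumes q_pos: "0 < q" and q_less_1: "q < 1"
begin

lemma filterlim_exp_power_Suc_Suc:
  "0 < b \<Longrightarrow> filterlim (\<lambda>n. exp (b * \<Theta> ^ Suc (Suc n)) * q ^ Suc (Suc n)) at_top sequentially"
  using filterlim_compose[OF filterlim_exp_power_mult_power[OF \<Theta>_gt_1 q_pos]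
      filterlim_compose[OF filterlim_Suc filterlim_Suc]] .

lemma eventually_N_ratio_le:
  assumes "0 \<le> c"
  shows "\<forall>\<^sub>F n in sequentially. c * (real (N n) / real (N (Suc n))) \<le> q ^ Suc (Suc n)"
proof -
  define b where "b = 1 - 1 / \<Theta>"
  have "0 < b" using \<Theta>_gt_1 by (simp add: b_def)
  from filterlim_exp_power_Suc_Suc[OF this]
  have "\<forall>\<^sub>F n in sequentially. c * l2 / l1 \<le> exp (b * \<Theta> ^ Suc (Suc n)) * q ^ Suc (Suc n)"
    by (simp add: filterlim_at_top)
  then show ?thesis
  proof eventually_elim
    case (elim n)
    have "c * (real (N n) / real (N (Suc n))) \<le> c * (l2 / l1 * exp (- (b * \<Theta> ^ Suc (Suc n))))"
      using N_ratio_le assms unfolding b_def by (rule mult_left_mono)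
    also have "\<dots> = c * l2 / l1 / exp (b * \<Theta> ^ Suc (Suc n))"
      by (simp add: exp_minus divide_inverse)
    also have "\<dots> \<le> q ^ Suc (Suc n)"
      using elim by (subst pos_divide_le_eq) (simp_all add: mult.commute)
    finally show ?case .
  qed
qed

lemma filterlim_power_mult_N_powr:
  assumes "0 < a"
  shows "filterlim (\<lambda>n. q ^ Suc (Suc n) * real (N (Suc n)) powr a) at_top sequentially"
proof (rule filterlim_at_top_mono)
  show "filterlim (\<lambda>n. l1 powr a * (exp (a * \<Theta> ^ Suc (Suc n)) * q ^ Suc (Suc n))) at_top sequentially"
    using l1_pos by (intro filterlim_tendsto_pos_mult_at_top[OF tendsto_const _ filterlim_exp_power_Suc_Suc])
      (simp_all add: assms)
  have "l1 powr a * (exp (a * \<Theta> ^ Suc (Suc n)) * q ^ Suc (Suc n))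
      = q ^ Suc (Suc n) * (l1 * exp (\<Theta> ^ Suc (Suc n))) powr a" for n
    using l1_pos by (simp add: powr_mult exp_powr_real mult_ac)
  also have "\<dots> n \<le> q ^ Suc (Suc n) * real (N (Suc n)) powr a" for n
    using N_lower[of "Suc n"] l1_pos q_pos assms by (intro mult_left_mono powr_mono2) auto
  finally show "\<forall>\<^sub>F n in sequentially. l1 powr a * (exp (a * \<Theta> ^ Suc (Suc n)) * q ^ Suc (Suc n))
      \<le> q ^ Suc (Suc n) * real (N (Suc n)) powr a"
    by simp
qed

text \<open>Once \<open>5 N_m \<upsilon>\<close> is an integer, every later frequency \<open>N_k\<close> is a multiple of \<open>10 N_m\<close>, so the
  later terms are shifted by whole periods.\<close>
lemma lacunary_sine_increment_eq_sum:
  assumes "5 * real (N m) * \<upsilon> \<in> \<int>"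
  shows "lacunary_sine q (\<lambda>n. real (N n)) (x + \<upsilon>) - lacunary_sine q (\<lambda>n. real (N n)) x
    = (\<Sum>k\<le>m. q ^ Suc k * (sin (pi * real (N k) * (x + \<upsilon>)) - sin (pi * real (N k) * x)))"
proof -
  obtain j where j: "5 * real (N m) * \<upsilon> = of_int j" using assms by (auto elim: Ints_cases)
  have vanish: "sin (pi * real (N k) * (x + \<upsilon>)) = sin (pi * real (N k) * x)" if mk: "m < k" for k
  proof -
    obtain r where r: "N k = 10 * N m * r" using ten_N_dvd[OF mk] by (auto elim: dvdE)
    have "pi * real (N k) * \<upsilon> = 2 * pi * real r * (5 * real (N m) * \<upsilon>)"
      by (simp add: r mult_ac)
    then have "pi * real (N k) * (x + \<upsilon>) = pi * real (N k) * x + 2 * pi * of_int (int r * j)"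
      by (simp add: j distrib_left)
    then show ?thesis using sin_cos_eq_iff by blast
  qed
  have "lacunary_sine q (\<lambda>n. real (N n)) (x + \<upsilon>) - lacunary_sine q (\<lambda>n. real (N n)) x
      = (\<Sum>k. q ^ Suc k * (sin (pi * real (N k) * (x + \<upsilon>)) - sin (pi * real (N k) * x)))"
    unfolding lacunary_sine_def right_diff_distrib using q_pos q_less_1
    by (intro suminf_diff summable_lacunary_sine_terms) auto
  also have "\<dots> = (\<Sum>k\<le>m. q ^ Suc k * (sin (pi * real (N k) * (x + \<upsilon>)) - sin (pi * real (N k) * x)))"
    by (rule suminf_finite) (auto simp: vanish not_le)
  finally show ?thesis .
qed

lemma ex_lacunary_sine_step:
  "\<exists>\<upsilon>. \<upsilon> \<noteq> 0 \<and> \<bar>\<upsilon>\<bar> \<le> 1 / real (N (Suc n)) \<and>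
     sin (pi / 5) / 2 * q ^ Suc (Suc n) - q / (1 - q) * (pi * (real (N n) / real (N (Suc n))))
       \<le> \<bar>lacunary_sine q (\<lambda>n. real (N n)) (x + \<upsilon>) - lacunary_sine q (\<lambda>n. real (N n)) x\<bar>"
proof -
  define \<theta> where "\<theta> = pi * real (N (Suc n)) * x"
  obtain e :: int where e: "e \<in> {5, 1, -1}" "sin (pi / 5) / 2 \<le> \<bar>sin (\<theta> + pi * e / 5) - sin \<theta>\<bar>"
    using sin_step_fifth_pi by blast
  define \<upsilon> where "\<upsilon> = of_int e / (5 * real (N (Suc n)))"
  have N_Suc: "0 < real (N (Suc n))" using N_pos by simp
  have "\<upsilon> \<noteq> 0" "\<bar>\<upsilon>\<bar> \<le> 1 / real (N (Suc n))"
    using e(1) N_Suc by (auto simp: \<upsilon>_def abs_div divide_simps)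
  define d where "d k = q ^ Suc k * (sin (pi * real (N k) * (x + \<upsilon>)) - sin (pi * real (N k) * x))" for k
  have "5 * real (N (Suc n)) * \<upsilon> \<in> \<int>" using N_Suc by (simp add: \<upsilon>_def)
  from lacunary_sine_increment_eq_sum[OF this, of x]
  have split: "lacunary_sine q (\<lambda>n. real (N n)) (x + \<upsilon>) - lacunary_sine q (\<lambda>n. real (N n)) x
      = (\<Sum>k\<le>n. d k) + d (Suc n)"
    by (simp only: d_def sum.atMost_Suc)
  have "\<bar>pi * real (N k) * \<upsilon>\<bar> \<le> pi * (real (N n) / real (N (Suc n)))" if "k \<le> n" for k
  proof -
    have "real (N k) \<le> real (N n)" using strict_mono_less_eq[OF strict_mono_N] that by simp
    then show ?thesis
      using \<open>\<bar>\<upsilon>\<bar> \<le> 1 / real (N (Suc n))\<close> by (simp add: abs_mult mult_mono divide_inverse)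
  qed
  then have head: "\<bar>\<Sum>k\<le>n. d k\<bar> \<le> q / (1 - q) * (pi * (real (N n) / real (N (Suc n))))"
    unfolding d_def using q_pos q_less_1 by (intro abs_sine_sum_increment_le) auto
  have "pi * real (N (Suc n)) * (x + \<upsilon>) = \<theta> + pi * e / 5"
    using N_Suc by (simp add: \<theta>_def \<upsilon>_def field_simps)
  then have "\<bar>d (Suc n)\<bar> = q ^ Suc (Suc n) * \<bar>sin (\<theta> + pi * e / 5) - sin \<theta>\<bar>"
    using q_pos by (simp add: d_def \<theta>_def abs_mult del: power_Suc)
  then have main: "sin (pi / 5) / 2 * q ^ Suc (Suc n) \<le> \<bar>d (Suc n)\<bar>"
    using e(2) q_pos by (simp add: mult.commute mult_left_mono del: power_Suc)
  have "\<bar>d (Suc n)\<bar> \<le> \<bar>(\<Sum>k\<le>n. d k) + d (Suc n)\<bar> + \<bar>\<Sum>k\<le>n. d k\<bar>"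
    using abs_triangle_ineq[of "(\<Sum>k\<le>n. d k) + d (Suc n)" "- (\<Sum>k\<le>n. d k)"] by simp
  then have "sin (pi / 5) / 2 * q ^ Suc (Suc n) - q / (1 - q) * (pi * (real (N n) / real (N (Suc n))))
      \<le> \<bar>lacunary_sine q (\<lambda>n. real (N n)) (x + \<upsilon>) - lacunary_sine q (\<lambda>n. real (N n)) x\<bar>"
    unfolding split using head main by linarith
  with \<open>\<upsilon> \<noteq> 0\<close> \<open>\<bar>\<upsilon>\<bar> \<le> 1 / real (N (Suc n))\<close> show ?thesis by blast
qed

lemma lacunary_sine_nowhere_holder:
  assumes "0 < a"
  shows "\<exists>\<upsilon>::nat \<Rightarrow> real. (\<forall>m. \<upsilon> m \<noteq> 0) \<and> \<upsilon> \<longlonglongrightarrow> 0 \<and>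
    filterlim (\<lambda>m. \<bar>lacunary_sine q (\<lambda>n. real (N n)) (x + \<upsilon> m) - lacunary_sine q (\<lambda>n. real (N n)) x\<bar>
      / \<bar>\<upsilon> m\<bar> powr a) at_top sequentially"
proof -
  let ?P = "lacunary_sine q (\<lambda>n. real (N n))" and ?c = "sin (pi / 5) / 2"
  have "0 < ?c" by (simp add: sin_gt_zero)
  have "\<forall>n. \<exists>\<upsilon>. \<upsilon> \<noteq> 0 \<and> \<bar>\<upsilon>\<bar> \<le> 1 / real (N (Suc n)) \<and>
     ?c * q ^ Suc (Suc n) - q / (1 - q) * (pi * (real (N n) / real (N (Suc n)))) \<le> \<bar>?P (x + \<upsilon>) - ?P x\<bar>"
    by (intro allI ex_lacunary_sine_step)
  from choice[OF this] obtain \<upsilon> where \<upsilon>: "\<forall>n. \<upsilon> n \<noteq> 0 \<and> \<bar>\<upsilon> n\<bar> \<le> 1 / real (N (Suc n)) \<and>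
     ?c * q ^ Suc (Suc n) - q / (1 - q) * (pi * (real (N n) / real (N (Suc n)))) \<le> \<bar>?P (x + \<upsilon> n) - ?P x\<bar>" ..
  then have \<upsilon>_ne: "\<upsilon> n \<noteq> 0" and \<upsilon>_le: "\<bar>\<upsilon> n\<bar> \<le> 1 / real (N (Suc n))"
    and step: "?c * q ^ Suc (Suc n) - q / (1 - q) * (pi * (real (N n) / real (N (Suc n))))
      \<le> \<bar>?P (x + \<upsilon> n) - ?P x\<bar>" for n
    by blast+
  have "\<upsilon> \<longlonglongrightarrow> 0"
  proof (rule Lim_null_comparison)
    show "\<forall>\<^sub>F n in sequentially. norm (\<upsilon> n) \<le> inverse (real (N (Suc n)))"
      using \<upsilon>_le by (simp add: divide_inverse)
    show "(\<lambda>n. inverse (real (N (Suc n)))) \<longlonglongrightarrow> 0"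
      by (rule tendsto_inverse_0_at_top[OF filterlim_N_Suc])
  qed
  have "\<forall>\<^sub>F n in sequentially. 2 / ?c * (q / (1 - q) * pi) * (real (N n) / real (N (Suc n)))
      \<le> q ^ Suc (Suc n)"
    using \<open>0 < ?c\<close> q_pos q_less_1 by (intro eventually_N_ratio_le) auto
  then have "\<forall>\<^sub>F n in sequentially.
      ?c / 2 * (q ^ Suc (Suc n) * real (N (Suc n)) powr a) \<le> \<bar>?P (x + \<upsilon> n) - ?P x\<bar> / \<bar>\<upsilon> n\<bar> powr a"
  proof eventually_elim
    case (elim n)
    have "q / (1 - q) * (pi * (real (N n) / real (N (Suc n))))
        = ?c / 2 * (2 / ?c * (q / (1 - q) * pi) * (real (N n) / real (N (Suc n))))"
      using \<open>0 < ?c\<close> q_less_1 N_pos[of "Suc n"] by (simp add: field_simps)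
    also have "\<dots> \<le> ?c / 2 * q ^ Suc (Suc n)"
      using elim \<open>0 < ?c\<close> by (intro mult_left_mono) auto
    finally have increment: "?c / 2 * q ^ Suc (Suc n) \<le> \<bar>?P (x + \<upsilon> n) - ?P x\<bar>"
      using step[of n] by linarith
    have "\<bar>\<upsilon> n\<bar> * real (N (Suc n)) \<le> 1"
      using \<upsilon>_le[of n] N_pos[of "Suc n"] by (simp add: pos_le_divide_eq)
    then have "\<bar>\<upsilon> n\<bar> powr a * real (N (Suc n)) powr a \<le> 1"
      using powr_le1[of a "\<bar>\<upsilon> n\<bar> * real (N (Suc n))"] assms by (simp add: powr_mult)
    then have "?c / 2 * (q ^ Suc (Suc n) * real (N (Suc n)) powr a) * \<bar>\<upsilon> n\<bar> powr a \<le> ?c / 2 * q ^ Suc (Suc n)"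
      using \<open>0 < ?c\<close> q_pos by (simp add: mult_left_le mult_ac)
    also note increment
    finally show ?case using \<upsilon>_ne[of n] by (simp add: pos_le_divide_eq)
  qed
  moreover have "filterlim (\<lambda>n. ?c / 2 * (q ^ Suc (Suc n) * real (N (Suc n)) powr a)) at_top sequentially"
    using \<open>0 < ?c\<close>
    by (intro filterlim_tendsto_pos_mult_at_top[OF tendsto_const _ filterlim_power_mult_N_powr[OF assms]])
      simp
  ultimately have "filterlim (\<lambda>n. \<bar>?P (x + \<upsilon> n) - ?P x\<bar> / \<bar>\<upsilon> n\<bar> powr a) at_top sequentially"
    by (rule filterlim_at_top_mono[rotated])
  with \<upsilon>_ne \<open>\<upsilon> \<longlonglongrightarrow> 0\<close> show ?thesis by blast
qed

end

end

lemma lacunary_frequencies_Suc: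
  fixes q lam l1 l2 :: real and Q :: "nat \<Rightarrow> nat"
  assumes "0 < q" "q < 1" "0 < lam" "0 < l1"
    and "\<forall>n\<ge>1. 0 < Q n"
    and "\<forall>n\<ge>1. Q n dvd Q (Suc n) \<and> 10 dvd Q (Suc n) div Q n"
    and "\<forall>n\<ge>1. l1 * exp (((1/q) powr (1/lam)) ^ n) \<le> real (Q n)
                 \<and> real (Q n) \<le> l2 * exp (((1/q) powr (1/lam)) ^ n)"
  shows "lacunary_frequencies (\<lambda>n. Q (Suc n)) ((1/q) powr (1/lam)) l1 l2"
proof
  show "10 * Q (Suc n) dvd Q (Suc (Suc n))" for n
    using assms(5,6) dvd_div_iff_mult[of "Q (Suc n)" "Q (Suc (Suc n))" 10] by (simp add: Suc_le_eq)
  show "1 < (1/q) powr (1/lam)" using assms(1-3) by (intro gr_one_powr) auto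
qed (use assms(4,5,7) in auto)

theorem mainTheorem7:
  fixes q lam l1 l2 :: real and Q :: "nat \<Rightarrow> nat"
  assumes "0 < q" "q < 1/3" "lam > 1"
    and "\<forall>n\<ge>1. Q n > 0 \<and> 10 dvd Q n"
    and "\<forall>n\<ge>1. Q n dvd Q (Suc n) \<and> 10 dvd (Q (Suc n) div Q n)"
    and "0 < l1" "l1 \<le> l2"
    and "\<forall>n\<ge>1. l1 * exp (((1/q) powr (1/lam)) ^ n) \<le> real (Q n)
                 \<and> real (Q n) \<le> l2 * exp (((1/q) powr (1/lam)) ^ n)"
  defines "PH \<equiv> (\<lambda>z::real^4.
      (\<Sum>n. q ^ (Suc n) / real (Q (Suc n)) ^ 6 * sin (pi * real (Q (Suc n)) * z $ 1))
    + (\<Sum>n. q ^ (Suc n) / real (Q (Suc n)) ^ 6 * sin (pi * real (Q (Suc n)) * z $ 4)))"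
  and "P \<equiv> (\<lambda>x::real. \<Sum>n. q ^ (Suc n) * sin (pi * real (Q (Suc n)) * x))"
  shows "Ck 6 PH
    \<and> (\<exists>C h0. C > 0 \<and> 0 < h0 \<and> h0 < 1 \<and>
         (\<forall>\<alpha> z h. length \<alpha> = 6 \<and> 0 < infnorm h \<and> infnorm h \<le> h0 \<longrightarrow>
            \<bar>iter_partial \<alpha> PH (z + h) - iter_partial \<alpha> PH z\<bar>
              \<le> C * (- ln (infnorm h)) powr (- lam)))
    \<and> (\<forall>z. iter_partial [1,1,1,1,1,1] PH z = - (pi ^ 6) * P (z $ 1))
    \<and> (\<forall>x a. 0 < a \<and> a < 1 \<longrightarrow>
         (\<exists>\<upsilon>::nat \<Rightarrow> real. (\<forall>m. \<upsilon> m \<noteq> 0) \<and> \<upsilon> \<longlonglongrightarrow> 0 \<and>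
            filterlim (\<lambda>m. \<bar>P (x + \<upsilon> m) - P x\<bar> / \<bar>\<upsilon> m\<bar> powr a) at_top sequentially))"
proof -
  have q: "0 < q" "q < 1" and lam: "0 < lam" using assms(1-3) by auto
  interpret lacunary_frequencies "\<lambda>n. Q (Suc n)" "(1/q) powr (1/lam)" l1 l2
    by (rule lacunary_frequencies_Suc) (use assms in auto)
  have Q_ge_1: "1 \<le> real (Q (Suc n))" for n using N_pos[of n] by simp
  define F where "F = lacunary_deriv q (\<lambda>n. real (Q (Suc n))) 6"
  interpret F: real_derivative_chain F 6
    unfolding F_def by (rule real_derivative_chain_lacunary_deriv[OF q Q_ge_1])
  have PH: "PH = (\<lambda>z. F 0 (z $ 1) + F 0 (z $ 4))" by (simp add: PH_def F_def lacunary_deriv_0)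
  have P: "P = lacunary_sine q (\<lambda>n. real (Q (Suc n)))" by (simp add: P_def lacunary_sine_def[abs_def])
  obtain C h0 where C: "0 < C" "0 < h0" "h0 < 1"
    and holder: "\<And>x t r. 0 < r \<Longrightarrow> r \<le> h0 \<Longrightarrow> \<bar>t\<bar> \<le> r \<Longrightarrow>
      \<bar>P (x + t) - P x\<bar> \<le> C * (- ln r) powr (- lam)"
    using lacunary_sine_log_holder[OF q lam, of l2 "\<lambda>n. real (Q (Suc n))"] N_upper assms(6,7)
    unfolding P by fastforce
  have "\<bar>F 6 (y + s) - F 6 y\<bar> \<le> pi ^ 6 * (C * (- ln r) powr (- lam))"
    if "0 < r" "r \<le> h0" "\<bar>s\<bar> \<le> r" for y s r
    using holder[OF that] unfolding F_def abs_lacunary_deriv_six_diff[OF q Q_ge_1] P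
    by (intro mult_left_mono) auto
  then have "\<bar>iter_partial \<alpha> PH (z + h) - iter_partial \<alpha> PH z\<bar>
      \<le> 2 * (pi ^ 6 * (C * (- ln (infnorm h)) powr (- lam)))"
    if "length \<alpha> = 6" "0 < infnorm h" "infnorm h \<le> h0" for \<alpha> :: "4 list" and z h
    unfolding PH using that by (intro F.iter_partial_separable_increment_le[where r = "infnorm h"]) auto
  moreover have "iter_partial [1,1,1,1,1,1] PH = (\<lambda>z. F 6 (z $ 1))"
    using F.iter_partial_replicate[of 6 "1::4" 4] by (simp add: PH numeral_eq_Suc)
  moreover have "Ck 6 PH" unfolding PH by (rule F.Ck_coordinate_sum)
  ultimately show ?thesis
    using C lacunary_sine_nowhere_holder[OF q] unfolding P
    by (intro conjI exI[of _ "2 * pi ^ 6 * C"] exI[of _ h0])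
      (auto simp: F_def lacunary_deriv_six[OF q Q_ge_1] mult.assoc)
qed

end
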